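(* Let $L$ be an ideal lattice. Then $(\operatorname{Spec}L,D)$ is a spectrum of $L$, where $D(a)=\{p\in\operatorname{Spec}L\mid a\not\leq p\}$. For every spectrum $(X,\delta)$ of $L$ there exists a unique continuous map $f\colon X\to\operatorname{Spec}L$ such that $\delta(a)=f^{-1}(D(a))$ for all $a\in L$; it is given by $f(x)=\bigvee\{c\in L\mid c\text{ compact},\ x\notin\delta(c)\}$.
   Context: An ideal lattice is a poset $(L,\leq)$ with an associative multiplication such that: (L1) $L$ is a complete lattice; (L2) every element is a supremum of compact elements ($a$ is compact if $a\leq\sup A$ implies $a\leq\sup A'$ for some finite $A'\subseteq A$); (L3) multiplication distributes over binary joins on both sides; (L4) $1=\sup L$ is compact and is a two-sided identity; (L5) products of compact elements are compact. Prime: $p\neq1$ with $ab\leq p\Rightarrow a\leq p$ or $b\leq p$. $\operatorname{Spec}L$: set of primes with the Zariski topology whose closed sets are $V(a)=\{p\mid a\leq p\}$. A spectrum of $L$ is a pair $(X,\delta)$ with $X$ a topological space and $\delta$ assigning to each $a\in L$ an open subset $\delta(a)\subseteq X$ such that $\delta(\bigvee_{a\in A}a)=\bigcup_{a\in A}\delta(a)$ for all $A\subseteq L$, $\delta(1)=X$, and $\delta(ab)=\delta(a)\cap\delta(b)$ for all $a,b\in L$. *)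

theory Defs
  imports "HOL-Analysis.Abstract_Topology"
begin

definition compact_el :: "'a::complete_lattice \<Rightarrow> bool" where
  "compact_el a \<longleftrightarrow>
     (\<forall>A. a \<le> Sup A \<longrightarrow> (\<exists>A'. finite A' \<and> A' \<subseteq> A \<and> a \<le> Sup A'))"

definition ideal_lattice :: "('a::complete_lattice \<Rightarrow> 'a \<Rightarrow> 'a) \<Rightarrow> bool" where
  "ideal_lattice m \<longleftrightarrow>
     (\<forall>a b c. m (m a b) c = m a (m b c)) \<and>
     (\<forall>a::'a. \<exists>C. (\<forall>c\<in>C. compact_el c) \<and> a = Sup C) \<and>
     (\<forall>a b c. m a (sup b c) = sup (m a b) (m a c)) \<and>
     (\<forall>a b c. m (sup b c) a = sup (m b a) (m c a)) \<and>
     compact_el (top::'a) \<and>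
     (\<forall>a. m top a = a \<and> m a top = a) \<and>
     (\<forall>a b. compact_el a \<and> compact_el b \<longrightarrow> compact_el (m a b))"

definition prime_el :: "('a::complete_lattice \<Rightarrow> 'a \<Rightarrow> 'a) \<Rightarrow> 'a \<Rightarrow> bool" where
  "prime_el m p \<longleftrightarrow> p \<noteq> top \<and> (\<forall>a b. m a b \<le> p \<longrightarrow> a \<le> p \<or> b \<le> p)"

definition Spec :: "('a::complete_lattice \<Rightarrow> 'a \<Rightarrow> 'a) \<Rightarrow> 'a set" where
  "Spec m = {p. prime_el m p}"

definition Dset :: "('a::complete_lattice \<Rightarrow> 'a \<Rightarrow> 'a) \<Rightarrow> 'a \<Rightarrow> 'a set" where
  "Dset m a = {p \<in> Spec m. \<not> a \<le> p}"

definition zariski :: "('a::complete_lattice \<Rightarrow> 'a \<Rightarrow> 'a) \<Rightarrow> 'a topology" where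
  "zariski m = topology (\<lambda>U. \<exists>a. U = Dset m a)"

definition is_spectrum ::
  "('a::complete_lattice \<Rightarrow> 'a \<Rightarrow> 'a) \<Rightarrow> 'b topology \<Rightarrow> ('a \<Rightarrow> 'b set) \<Rightarrow> bool" where
  "is_spectrum m X \<delta> \<longleftrightarrow>
     (\<forall>a. openin X (\<delta> a)) \<and>
     (\<forall>A. \<delta> (Sup A) = (\<Union>a\<in>A. \<delta> a)) \<and>
     \<delta> top = topspace X \<and>
     (\<forall>a b. \<delta> (m a b) = \<delta> a \<inter> \<delta> b)"

end

theory Submission
  imports Defs
begin

text \<open>Every element of an ideal lattice is the join of the compact elements below it.  Hence, for
  a point x of a spectrum (X, \<delta>), the join f x of all compact c with x \<notin> \<delta> c satisfies
  a \<le> f x \<longleftrightarrow> x \<notin> \<delta> a for every a, by compactness and because \<delta> preserves joins.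
  Multiplicativity of \<delta> then makes f x prime, and the equivalence says precisely that \<delta> is the
  pullback of D along f.  Any other such map g has c \<le> g x \<longleftrightarrow> x \<notin> \<delta> c, so g x is the join of
  the same compact elements.\<close>

lemma ideal_lattice_mult_sup_left:
  "ideal_lattice m \<Longrightarrow> m (sup b c) a = sup (m b a) (m c a)"
  by (simp add: ideal_lattice_def)

lemma ideal_lattice_mult_sup_right:
  "ideal_lattice m \<Longrightarrow> m a (sup b c) = sup (m a b) (m a c)"
  by (simp add: ideal_lattice_def)

lemma ideal_lattice_mult_top_left: "ideal_lattice m \<Longrightarrow> m top a = a"
  by (simp add: ideal_lattice_def)

lemma ideal_lattice_mult_top_right: "ideal_lattice m \<Longrightarrow> m a top = a"
  by (simp add: ideal_lattice_def)

lemma ideal_lattice_ex_compact_Sup: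
  fixes m :: "'a::complete_lattice \<Rightarrow> 'a \<Rightarrow> 'a" and a :: 'a
  shows "ideal_lattice m \<Longrightarrow> \<exists>C. (\<forall>c\<in>C. compact_el c) \<and> a = Sup C"
  unfolding ideal_lattice_def by (elim conjE) (erule spec)

lemma ideal_lattice_Sup_compact_below:
  fixes m :: "'a::complete_lattice \<Rightarrow> 'a \<Rightarrow> 'a" and a :: 'a
  assumes "ideal_lattice m"
  shows "Sup {c. compact_el c \<and> c \<le> a} = a"
proof (rule antisym)
  obtain C where C: "\<forall>c\<in>C. compact_el c" "a = Sup C"
    using ideal_lattice_ex_compact_Sup[OF assms] by blast
  then have "C \<subseteq> {c. compact_el c \<and> c \<le> a}"
    using Sup_upper by blast
  then show "a \<le> Sup {c. compact_el c \<and> c \<le> a}"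
    using C(2) Sup_subset_mono by blast
qed (simp add: Sup_le_iff)

lemma ideal_lattice_mult_le_left:
  assumes "ideal_lattice m"
  shows "m a b \<le> a"
proof -
  have "sup (m a b) a = a"
    using ideal_lattice_mult_sup_right[OF assms, of a b top] ideal_lattice_mult_top_right[OF assms]
    by simp
  then show ?thesis
    by (simp add: sup.absorb_iff2)
qed

lemma ideal_lattice_mult_le_right:
  assumes "ideal_lattice m"
  shows "m a b \<le> b"
proof -
  have "sup (m a b) b = b"
    using ideal_lattice_mult_sup_left[OF assms, of a top b] ideal_lattice_mult_top_left[OF assms]
    by simp
  then show ?thesis
    by (simp add: sup.absorb_iff2)
qed

lemma Dset_Sup: "Dset m (Sup A) = (\<Union>a\<in>A. Dset m a)"
  unfolding Dset_def by (auto simp: Sup_le_iff)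

lemma Dset_top: "Dset m top = Spec m"
  unfolding Dset_def Spec_def prime_el_def by (auto simp: top_unique)

lemma Dset_mult:
  assumes "ideal_lattice m"
  shows "Dset m (m a b) = Dset m a \<inter> Dset m b"
  using ideal_lattice_mult_le_left[OF assms, of a b] ideal_lattice_mult_le_right[OF assms, of a b]
  unfolding Dset_def Spec_def prime_el_def by (auto intro: order_trans)

lemma istopology_Dset:
  assumes "ideal_lattice m"
  shows "istopology (\<lambda>U. \<exists>a. U = Dset m a)"
  unfolding istopology_def
proof (intro conjI allI impI)
  fix S T
  assume "\<exists>a. S = Dset m a" "\<exists>b. T = Dset m b"
  then obtain a b where "S = Dset m a" "T = Dset m b"
    by blast
  then have "S \<inter> T = Dset m (m a b)"
    by (simp add: Dset_mult[OF assms])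
  then show "\<exists>c. S \<inter> T = Dset m c" ..
next
  fix K :: "'a set set"
  assume "\<forall>U\<in>K. \<exists>a. U = Dset m a"
  then have "K = Dset m ` {a. Dset m a \<in> K}"
    by auto
  then have "\<Union>K = Dset m (Sup {a. Dset m a \<in> K})"
    by (metis Dset_Sup)
  then show "\<exists>a. \<Union>K = Dset m a" ..
qed

lemma openin_zariski:
  assumes "ideal_lattice m"
  shows "openin (zariski m) U \<longleftrightarrow> (\<exists>a. U = Dset m a)"
  unfolding zariski_def using topology_inverse'[OF istopology_Dset[OF assms]] by simp

lemma topspace_zariski:
  assumes "ideal_lattice m"
  shows "topspace (zariski m) = Spec m"
proof -
  have "topspace (zariski m) = \<Union>(range (Dset m))"
    unfolding topspace_def openin_zariski[OF assms] by blast
  also have "\<dots> = Spec m"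
  proof
    show "\<Union>(range (Dset m)) \<subseteq> Spec m"
      unfolding Dset_def by blast
    show "Spec m \<subseteq> \<Union>(range (Dset m))"
      unfolding Dset_top[symmetric] by blast
  qed
  finally show ?thesis .
qed

lemma is_spectrum_zariski:
  assumes "ideal_lattice m"
  shows "is_spectrum m (zariski m) (Dset m)"
  unfolding is_spectrum_def openin_zariski[OF assms] topspace_zariski[OF assms]
  by (auto simp: Dset_Sup Dset_top Dset_mult[OF assms])

lemma is_spectrum_openin: "is_spectrum m X \<delta> \<Longrightarrow> openin X (\<delta> a)"
  by (simp add: is_spectrum_def)

lemma is_spectrum_Sup: "is_spectrum m X \<delta> \<Longrightarrow> \<delta> (Sup A) = (\<Union>a\<in>A. \<delta> a)"
  by (simp add: is_spectrum_def)

lemma is_spectrum_top: "is_spectrum m X \<delta> \<Longrightarrow> \<delta> top = topspace X"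
  by (simp add: is_spectrum_def)

lemma is_spectrum_mult: "is_spectrum m X \<delta> \<Longrightarrow> \<delta> (m a b) = \<delta> a \<inter> \<delta> b"
  by (simp add: is_spectrum_def)

lemma is_spectrum_mono:
  assumes "is_spectrum m X \<delta>" "a \<le> b"
  shows "\<delta> a \<subseteq> \<delta> b"
proof -
  have "\<delta> (sup a b) = \<delta> a \<union> \<delta> b"
    using is_spectrum_Sup[OF assms(1), of "{a, b}"] by simp
  with assms(2) show ?thesis
    by (metis Un_upper1 sup.absorb2)
qed

definition spectrum_point :: "('a::complete_lattice \<Rightarrow> 'b set) \<Rightarrow> 'b \<Rightarrow> 'a" where
  "spectrum_point \<delta> x = Sup {c. compact_el c \<and> x \<notin> \<delta> c}"

lemma le_spectrum_point_iff:
  assumes L: "ideal_lattice m" and S: "is_spectrum m X \<delta>"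
  shows "a \<le> spectrum_point \<delta> x \<longleftrightarrow> x \<notin> \<delta> a"
proof
  let ?S = "{c. compact_el c \<and> x \<notin> \<delta> c}"
  assume a_le: "a \<le> spectrum_point \<delta> x"
  show "x \<notin> \<delta> a"
  proof
    assume "x \<in> \<delta> a"
    moreover have "\<delta> a = (\<Union>c\<in>{c. compact_el c \<and> c \<le> a}. \<delta> c)"
      using is_spectrum_Sup[OF S, of "{c. compact_el c \<and> c \<le> a}"]
      by (simp add: ideal_lattice_Sup_compact_below[OF L])
    ultimately obtain c where c: "compact_el c" "c \<le> a" "x \<in> \<delta> c"
      by blast
    have "c \<le> Sup ?S"
      using c(2) a_le unfolding spectrum_point_def by (rule order_trans)
    then obtain S' where S': "finite S'" "S' \<subseteq> ?S" "c \<le> Sup S'"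
      using c(1) unfolding compact_el_def by meson
    have "\<delta> (Sup S') = (\<Union>d\<in>S'. \<delta> d)"
      by (rule is_spectrum_Sup[OF S])
    with S'(2) have "x \<notin> \<delta> (Sup S')"
      by blast
    then show False
      using is_spectrum_mono[OF S S'(3)] c(3) by blast
  qed
next
  assume "x \<notin> \<delta> a"
  then have "{c. compact_el c \<and> c \<le> a} \<subseteq> {c. compact_el c \<and> x \<notin> \<delta> c}"
    using is_spectrum_mono[OF S] by blast
  then have "Sup {c. compact_el c \<and> c \<le> a} \<le> spectrum_point \<delta> x"
    unfolding spectrum_point_def by (rule Sup_subset_mono)
  then show "a \<le> spectrum_point \<delta> x"
    by (simp add: ideal_lattice_Sup_compact_below[OF L])
qed

lemma spectrum_point_in_Spec:
  assumes L: "ideal_lattice m" and S: "is_spectrum m X \<delta>" and x: "x \<in> topspace X"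
  shows "spectrum_point \<delta> x \<in> Spec m"
  unfolding Spec_def prime_el_def
proof (intro CollectI conjI allI impI)
  have "x \<in> \<delta> top"
    using x is_spectrum_top[OF S] by simp
  then show "spectrum_point \<delta> x \<noteq> top"
    using le_spectrum_point_iff[OF L S, of top x] by auto
next
  fix a b
  assume "m a b \<le> spectrum_point \<delta> x"
  then have "x \<notin> \<delta> a \<inter> \<delta> b"
    using le_spectrum_point_iff[OF L S] is_spectrum_mult[OF S] by metis
  then show "a \<le> spectrum_point \<delta> x \<or> b \<le> spectrum_point \<delta> x"
    using le_spectrum_point_iff[OF L S] by blast
qed

lemma spectrum_eq_vimage_Dset:
  assumes L: "ideal_lattice m" and S: "is_spectrum m X \<delta>"
  shows "\<delta> a = {x \<in> topspace X. spectrum_point \<delta> x \<in> Dset m a}"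
proof (rule set_eqI)
  fix x
  have "\<delta> a \<subseteq> topspace X"
    using is_spectrum_openin[OF S] by (rule openin_subset)
  then show "x \<in> \<delta> a \<longleftrightarrow> x \<in> {x \<in> topspace X. spectrum_point \<delta> x \<in> Dset m a}"
    using le_spectrum_point_iff[OF L S, of a x] spectrum_point_in_Spec[OF L S, of x]
    unfolding Dset_def by blast
qed

lemma continuous_map_spectrum_point:
  assumes L: "ideal_lattice m" and S: "is_spectrum m X \<delta>"
  shows "continuous_map X (zariski m) (spectrum_point \<delta>)"
  unfolding continuous_map_def
proof (intro conjI allI impI)
  show "spectrum_point \<delta> \<in> topspace X \<rightarrow> topspace (zariski m)"
    using spectrum_point_in_Spec[OF L S] topspace_zariski[OF L] by blast
next
  fix U
  assume "openin (zariski m) U"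
  then obtain a where "U = Dset m a"
    using openin_zariski[OF L] by blast
  then show "openin X {x \<in> topspace X. spectrum_point \<delta> x \<in> U}"
    using spectrum_eq_vimage_Dset[OF L S, of a] is_spectrum_openin[OF S, of a] by simp
qed

lemma continuous_map_eq_spectrum_point:
  assumes L: "ideal_lattice m"
    and g: "continuous_map X (zariski m) g"
    and \<delta>: "\<forall>a. \<delta> a = {x \<in> topspace X. g x \<in> Dset m a}"
    and x: "x \<in> topspace X"
  shows "g x = spectrum_point \<delta> x"
proof -
  have "g x \<in> Spec m"
    using continuous_map_image_subset_topspace[OF g] x topspace_zariski[OF L] by blast
  then have "x \<notin> \<delta> c \<longleftrightarrow> c \<le> g x" for c
    using x \<delta> unfolding Dset_def by blast
  then have "spectrum_point \<delta> x = Sup {c. compact_el c \<and> c \<le> g x}"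
    unfolding spectrum_point_def by simp
  then show ?thesis
    using ideal_lattice_Sup_compact_below[OF L] by simp
qed

theorem mainTheorem7:
  fixes m :: "'a::complete_lattice \<Rightarrow> 'a \<Rightarrow> 'a"
  assumes "ideal_lattice m"
  shows "is_spectrum m (zariski m) (Dset m) \<and>
    (\<forall>(X::'b topology) \<delta>. is_spectrum m X \<delta> \<longrightarrow>
       (let f = (\<lambda>x. Sup {c. compact_el c \<and> x \<notin> \<delta> c}) in
          continuous_map X (zariski m) f \<and>
          (\<forall>a. \<delta> a = {x \<in> topspace X. f x \<in> Dset m a}) \<and>
          (\<forall>g. continuous_map X (zariski m) g \<and>
               (\<forall>a. \<delta> a = {x \<in> topspace X. g x \<in> Dset m a}) \<longrightarrow>
               (\<forall>x\<in>topspace X. g x = f x))))"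
  unfolding Let_def spectrum_point_def[symmetric]
proof (intro conjI allI impI ballI)
  show "is_spectrum m (zariski m) (Dset m)"
    by (rule is_spectrum_zariski[OF assms])
  fix X :: "'b topology" and \<delta>
  assume S: "is_spectrum m X \<delta>"
  show "continuous_map X (zariski m) (spectrum_point \<delta>)"
    by (rule continuous_map_spectrum_point[OF assms S])
  show "\<delta> a = {x \<in> topspace X. spectrum_point \<delta> x \<in> Dset m a}" for a
    by (rule spectrum_eq_vimage_Dset[OF assms S])
  show "g x = spectrum_point \<delta> x"
    if g: "continuous_map X (zariski m) g \<and> (\<forall>a. \<delta> a = {x \<in> topspace X. g x \<in> Dset m a})"
      and x: "x \<in> topspace X" for g x
    by (rule continuous_map_eq_spectrum_point[OF assms conjunct1[OF g] conjunct2[OF g] x])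
qed

end
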